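(* There exists an almost surely positive random variable $M$ such that almost surely $X_n\ge M\,n^{p/2}$ for all $n\ge1$.
   Context: A sign-decorated binary tree is a finite planar rooted tree in which every internal vertex (node) has exactly two ordered children and carries a sign $\oplus$ or $\ominus$; $\mathrm{LIS}(t)$ is the maximal number of leaves of a subtree (induced by a set of leaves, unary vertices contracted) all of whose nodes carry $\oplus$. Fix $p\in(0,1)$. Trees $(T_n)_{n\ge1}$ are coupled by Rémy's algorithm: $T_1$ is a single leaf with a planting edge below it; given $T_n$, pick one of its $2n-1$ edges uniformly at random, insert on it a new node with an independent sign ($\oplus$ with probability $p$), and graft a new leaf on its left or right with probability $1/2$ each, giving $T_{n+1}$. $X_n=\mathrm{LIS}(T_n)$. *)

theory Defs
  imports "HOL-Probability.Probability"
begin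

text \<open>Sign-decorated binary trees. A node carries True for the sign plus
  and False for the sign minus.\<close>
datatype stree = Leaf | Node bool stree stree

text \<open>Number of vertices (leaves and nodes); equals the number of edges,
  each vertex being identified with the edge just above it (the root with the
  planting edge).\<close>
fun nverts :: "stree \<Rightarrow> nat" where
  "nverts Leaf = 1"
| "nverts (Node s l r) = 1 + nverts l + nverts r"

text \<open>Leaves, addressed by their path from the root (False = left child).\<close>
fun leaves :: "stree \<Rightarrow> bool list set" where
  "leaves Leaf = {[]}"
| "leaves (Node s l r) = Cons False ` leaves l \<union> Cons True ` leaves r"

text \<open>Sign of the vertex at a given path (meaningful only at internal nodes).\<close>
fun sign_at :: "stree \<Rightarrow> bool list \<Rightarrow> bool" where
  "sign_at Leaf _ = True"
| "sign_at (Node s l r) [] = s"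
| "sign_at (Node s l r) (b # q) = sign_at (if b then r else l) q"

text \<open>Longest common prefix of two paths: the path of the lowest common ancestor.\<close>
fun lcp :: "bool list \<Rightarrow> bool list \<Rightarrow> bool list" where
  "lcp (a # as) (b # bs) = (if a = b then a # lcp as bs else [])"
| "lcp _ _ = []"

text \<open>A set of leaves induces a subtree whose nodes are exactly the lowest common
  ancestors of pairs of distinct leaves of the set; it is a plus-subtree iff all
  these nodes carry the plus sign.\<close>
definition plus_induced :: "stree \<Rightarrow> bool list set \<Rightarrow> bool" where
  "plus_induced t S \<longleftrightarrow> S \<subseteq> leaves t \<and>
     (\<forall>a\<in>S. \<forall>b\<in>S. a \<noteq> b \<longrightarrow> sign_at t (lcp a b))"

definition LIS :: "stree \<Rightarrow> nat" where
  "LIS t = Max (card ` {S. plus_induced t S})"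

text \<open>Insertion on the edge above the vertex with preorder index i (root = 0):
  a new node with sign s is inserted there, and a new leaf is grafted on its
  right (if side) or left (otherwise).\<close>
fun insert_at :: "nat \<Rightarrow> bool \<Rightarrow> bool \<Rightarrow> stree \<Rightarrow> stree" where
  "insert_at i s side Leaf =
     Node s Leaf Leaf"
| "insert_at i s side (Node s' l r) =
     (if i = 0 then (if side then Node s (Node s' l r) Leaf else Node s Leaf (Node s' l r))
      else if i - 1 < nverts l then Node s' (insert_at (i - 1) s side l) r
      else Node s' l (insert_at (i - 1 - nverts l) s side r))"

text \<open>Randomness of step k (from T_(k+1), which has 2k+1 edges, to T_(k+2)):
  a uniform edge index, a sign (plus with probability p) and a side (fair).\<close>
definition remy_step :: "real \<Rightarrow> nat \<Rightarrow> (nat \<times> bool \<times> bool) pmf" where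
  "remy_step p k = pair_pmf (pmf_of_set {0..<2*k+1}) (pair_pmf (bernoulli_pmf p) (bernoulli_pmf (1/2)))"

definition remy_space :: "real \<Rightarrow> (nat \<Rightarrow> nat \<times> bool \<times> bool) measure" where
  "remy_space p = PiM UNIV (\<lambda>k. measure_pmf (remy_step p k))"

text \<open>remy_tree \<omega> k is T_(k+1).\<close>
fun remy_tree :: "(nat \<Rightarrow> nat \<times> bool \<times> bool) \<Rightarrow> nat \<Rightarrow> stree" where
  "remy_tree \<omega> 0 = Leaf"
| "remy_tree \<omega> (Suc k) = (case \<omega> k of (i, s, side) \<Rightarrow> insert_at i s side (remy_tree \<omega> k))"

definition X :: "(nat \<Rightarrow> nat \<times> bool \<times> bool) \<Rightarrow> nat \<Rightarrow> nat" where
  "X \<omega> n = LIS (remy_tree \<omega> (n - 1))"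

end

theory Submission
  imports Defs
begin

text \<open>LIS(t) is at least the greedy count greedy_LIS t, which adds the counts of the two subtrees
  at a plus node and keeps the larger one at a minus node. If greedy_LIS t = y, at least (4y + 1)/3
  edges of t lie on the greedy subtree, and a plus node inserted on any of them raises the count.
  Hence along Remy's chain the potential 1/(y - 3/4) of the count contracts in expectation by the
  factor 1 - (4p/3)/(2k + 1) at step k, so its expectation is O(k^(-7p/12)). By Markov's inequality,
  the count at time k is below k^(p/2) with probability O(k^(-p/12)), which is summable along
  k = 2^j. Borel-Cantelli and the monotonicity of the count along the chain then give
  X_n \<ge> c n^(p/2) for all n, with a random c > 0.\<close>

section \<open>A greedy lower bound for LIS\<close>

fun greedy_LIS :: "stree \<Rightarrow> nat" where
  "greedy_LIS Leaf = 1"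
| "greedy_LIS (Node s l r) =
     (if s then greedy_LIS l + greedy_LIS r else max (greedy_LIS l) (greedy_LIS r))"

fun greedy_leaves :: "stree \<Rightarrow> bool list set" where
  "greedy_leaves Leaf = {[]}"
| "greedy_leaves (Node s l r) =
     (if s then Cons False ` greedy_leaves l \<union> Cons True ` greedy_leaves r
      else if greedy_LIS r \<le> greedy_LIS l then Cons False ` greedy_leaves l
      else Cons True ` greedy_leaves r)"

text \<open>The vertices on the paths from the root to the greedy leaves, as preorder indices
  (the edge numbering of \<^const>\<open>insert_at\<close>).\<close>
fun greedy_vertices :: "stree \<Rightarrow> nat set" where
  "greedy_vertices Leaf = {0}"
| "greedy_vertices (Node s l r) = insert 0
     (if s then Suc ` greedy_vertices l \<union> (\<lambda>i. i + 1 + nverts l) ` greedy_vertices r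
      else if greedy_LIS r \<le> greedy_LIS l then Suc ` greedy_vertices l
      else (\<lambda>i. i + 1 + nverts l) ` greedy_vertices r)"

lemma greedy_LIS_ge_1: "1 \<le> greedy_LIS t"
  by (induction t) auto

lemma finite_leaves: "finite (leaves t)"
  by (induction t) auto

lemma greedy_leaves_subset: "greedy_leaves t \<subseteq> leaves t"
  by (induction t) auto

lemma card_greedy_leaves: "card (greedy_leaves t) = greedy_LIS t"
proof (induction t)
  case (Node s l r)
  have "finite (greedy_leaves u)" for u
    using greedy_leaves_subset finite_leaves by (rule finite_subset)
  moreover have "Cons False ` greedy_leaves l \<inter> Cons True ` greedy_leaves r = {}"
    by auto
  ultimately show ?case
    using Node by (simp add: card_Un_disjoint card_image)
qed simp

lemma greedy_leaves_NodeE: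
  assumes "a \<in> greedy_leaves (Node s l r)"
  obtains x a' where "a = x # a'" "a' \<in> greedy_leaves (if x then r else l)"
    and "s \<or> x = (greedy_LIS l < greedy_LIS r)"
  using assms by (auto split: if_splits intro!: that)

lemma plus_induced_greedy_leaves: "plus_induced t (greedy_leaves t)"
proof -
  have "sign_at t (lcp a b)"
    if "a \<in> greedy_leaves t" "b \<in> greedy_leaves t" "a \<noteq> b" for a b
    using that
  proof (induction t arbitrary: a b)
    case (Node s l r)
    obtain x a' y b' where a: "a = x # a'" "a' \<in> greedy_leaves (if x then r else l)"
      "s \<or> x = (greedy_LIS l < greedy_LIS r)"
      and b: "b = y # b'" "b' \<in> greedy_leaves (if y then r else l)"
      "s \<or> y = (greedy_LIS l < greedy_LIS r)"
      using Node.prems(1,2) by (elim greedy_leaves_NodeE)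
    show ?case
    proof (cases "x = y")
      case True
      then show ?thesis
        using a b Node.prems(3) Node.IH by auto
    next
      case False
      then show ?thesis
        using a(1,3) b(1,3) by auto
    qed
  qed simp
  then show ?thesis
    unfolding plus_induced_def using greedy_leaves_subset by blast
qed

lemma greedy_LIS_le_LIS: "greedy_LIS t \<le> LIS t"
proof -
  have "finite {S. plus_induced t S}"
    by (rule finite_subset[of _ "Pow (leaves t)"]) (auto simp: plus_induced_def finite_leaves)
  moreover have "card (greedy_leaves t) \<in> card ` {S. plus_induced t S}"
    using plus_induced_greedy_leaves by blast
  ultimately show ?thesis
    unfolding LIS_def card_greedy_leaves[symmetric] by (simp add: Max_ge)
qed

lemma nverts_insert_at [simp]: "nverts (insert_at i s side t) = nverts t + 2"
  by (induction i s side t rule: insert_at.induct) auto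

lemma greedy_LIS_insert_at_mono: "greedy_LIS t \<le> greedy_LIS (insert_at i s side t)"
  by (induction i s side t rule: insert_at.induct) auto

lemma greedy_vertices_subset: "greedy_vertices t \<subseteq> {..<nverts t}"
  by (induction t) auto

lemma card_greedy_vertices_Node:
  "card (greedy_vertices (Node s l r)) = 1 +
     (if s then card (greedy_vertices l) + card (greedy_vertices r)
      else if greedy_LIS r \<le> greedy_LIS l then card (greedy_vertices l)
      else card (greedy_vertices r))"
proof -
  have fin: "finite (greedy_vertices u)" for u
    using greedy_vertices_subset by (rule finite_subset) simp
  have "Suc ` greedy_vertices l \<inter> (\<lambda>i. i + 1 + nverts l) ` greedy_vertices r = {}"
    using greedy_vertices_subset[of l] by force
  then show ?thesis
    using fin by (auto simp: card_insert_if card_Un_disjoint card_image inj_on_def)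
qed

lemma card_greedy_vertices_ge: "2 * greedy_LIS t \<le> card (greedy_vertices t) + 1"
  by (induction t) (auto simp: card_greedy_vertices_Node simp del: greedy_vertices.simps(2))

lemma card_greedy_vertices_ge_Node:
  assumes "t \<noteq> Leaf"
  shows "4 * greedy_LIS t + 1 \<le> 3 * card (greedy_vertices t)"
proof -
  obtain s l r where t: "t = Node s l r"
    using assms by (cases t) auto
  have "2 \<le> greedy_LIS t \<or> 2 * greedy_LIS t \<le> card (greedy_vertices t)"
    using greedy_LIS_ge_1[of l] greedy_LIS_ge_1[of r]
      card_greedy_vertices_ge[of l] card_greedy_vertices_ge[of r]
    by (auto simp: t card_greedy_vertices_Node simp del: greedy_vertices.simps(2))
  then show ?thesis
    using card_greedy_vertices_ge[of t] greedy_LIS_ge_1[of t] by linarith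
qed

lemma greedy_LIS_insert_plus:
  "i \<in> greedy_vertices t \<Longrightarrow> greedy_LIS t + 1 \<le> greedy_LIS (insert_at i True side t)"
proof (induction t arbitrary: i)
  case (Node s l r)
  show ?case
  proof (cases i)
    case (Suc j)
    then consider "j \<in> greedy_vertices l" "s \<or> greedy_LIS r \<le> greedy_LIS l"
      | j' where "j = j' + nverts l" "j' \<in> greedy_vertices r" "s \<or> \<not> greedy_LIS r \<le> greedy_LIS l"
      using Node.prems by (auto split: if_splits)
    then show ?thesis
    proof cases
      case 1
      then show ?thesis
        using Suc greedy_vertices_subset Node.IH(1)[of j] by fastforce
    next
      case 2
      then show ?thesis
        using Suc Node.IH(2)[of j'] by auto
    qed
  qed simp
qed simp

section \<open>Remy's chain as a product space\<close>

definition remy_insert :: "nat \<times> bool \<times> bool \<Rightarrow> stree \<Rightarrow> stree" where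
  "remy_insert x t = (case x of (i, s, side) \<Rightarrow> insert_at i s side t)"

lemma remy_tree_Suc [simp]: "remy_tree \<omega> (Suc k) = remy_insert (\<omega> k) (remy_tree \<omega> k)"
  by (simp add: remy_insert_def)

declare remy_tree.simps(2) [simp del]

lemma nverts_remy_tree: "nverts (remy_tree \<omega> k) = 2 * k + 1"
  by (induction k) (auto simp: remy_insert_def split: prod.splits)

lemma remy_tree_not_Leaf: "1 \<le> k \<Longrightarrow> remy_tree \<omega> k \<noteq> Leaf"
proof -
  have "insert_at i s side t \<noteq> Leaf" for i s side t
    by (cases t) auto
  then show "1 \<le> k \<Longrightarrow> remy_tree \<omega> k \<noteq> Leaf"
    by (cases k) (auto simp: remy_insert_def split: prod.splits)
qed

lemma greedy_LIS_remy_tree_mono: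
  "k \<le> k' \<Longrightarrow> greedy_LIS (remy_tree \<omega> k) \<le> greedy_LIS (remy_tree \<omega> k')"
proof (induction k' rule: dec_induct)
  case (step k')
  then show ?case
    using greedy_LIS_insert_at_mono
    by (auto simp: remy_insert_def split: prod.splits intro: order.trans)
qed simp

lemma remy_tree_cong: "(\<And>j. j < k \<Longrightarrow> \<omega> j = \<omega>' j) \<Longrightarrow> remy_tree \<omega> k = remy_tree \<omega>' k"
  by (induction k) auto

instance stree :: countable
  by countable_datatype

lemma product_prob_space_remy_step:
  "product_prob_space (\<lambda>k. measure_pmf (remy_step p k))"
  by (simp add: product_prob_space_def product_sigma_finite_def product_prob_space_axioms_def
      prob_space_measure_pmf prob_space_imp_sigma_finite)

lemma prob_space_remy_space: "prob_space (remy_space p)"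
  unfolding remy_space_def by (rule prob_space_PiM) (rule prob_space_measure_pmf)

lemma space_remy_space [simp]: "space (remy_space p) = UNIV"
  by (simp add: remy_space_def space_PiM)

lemma measurable_remy_tree_PiM:
  "{..<k} \<subseteq> J \<Longrightarrow>
     (\<lambda>\<omega>. remy_tree \<omega> k) \<in> PiM J (\<lambda>k. measure_pmf (remy_step p k)) \<rightarrow>\<^sub>M count_space UNIV"
proof (induction k)
  case (Suc k)
  have "(\<lambda>\<omega>. remy_insert (\<omega> k) (remy_tree \<omega> k))
      \<in> PiM J (\<lambda>k. measure_pmf (remy_step p k)) \<rightarrow>\<^sub>M count_space UNIV"
  proof (rule measurable_compose_countable[where f = "\<lambda>t \<omega>. remy_insert (\<omega> k) t"])
    have "k \<in> J"
      using Suc.prems by auto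
    then show "(\<lambda>\<omega>. remy_insert (\<omega> k) t) \<in> PiM J (\<lambda>k. measure_pmf (remy_step p k)) \<rightarrow>\<^sub>M count_space UNIV"
      for t
      by (rule measurable_compose[OF measurable_component_singleton]) simp
    have "{..<k} \<subseteq> J"
      using Suc.prems by auto
    then show "(\<lambda>\<omega>. remy_tree \<omega> k) \<in> PiM J (\<lambda>k. measure_pmf (remy_step p k)) \<rightarrow>\<^sub>M count_space UNIV"
      by (rule Suc.IH)
  qed
  then show ?case
    by simp
qed simp

lemma measurable_remy_tree: "(\<lambda>\<omega>. remy_tree \<omega> k) \<in> remy_space p \<rightarrow>\<^sub>M count_space UNIV"
  unfolding remy_space_def by (rule measurable_remy_tree_PiM) simp

lemma integrable_remy_tree_PiM:
  fixes h :: "stree \<Rightarrow> real"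
  assumes "{..<k} \<subseteq> J" "\<And>t. \<bar>h t\<bar> \<le> C"
  shows "integrable (PiM J (\<lambda>k. measure_pmf (remy_step p k))) (\<lambda>\<omega>. h (remy_tree \<omega> k))"
proof -
  interpret prob_space "PiM J (\<lambda>k. measure_pmf (remy_step p k))"
    by (rule prob_space_PiM) (rule prob_space_measure_pmf)
  show ?thesis
  proof (rule integrable_const_bound)
    show "AE \<omega> in PiM J (\<lambda>k. measure_pmf (remy_step p k)). norm (h (remy_tree \<omega> k)) \<le> C"
      using assms(2) by simp
    show "(\<lambda>\<omega>. h (remy_tree \<omega> k)) \<in> borel_measurable (PiM J (\<lambda>k. measure_pmf (remy_step p k)))"
      by (rule measurable_compose[OF measurable_remy_tree_PiM[OF assms(1)]]) simp
  qed
qed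

lemma integrable_remy_tree:
  fixes h :: "stree \<Rightarrow> real"
  shows "(\<And>t. \<bar>h t\<bar> \<le> C) \<Longrightarrow> integrable (remy_space p) (\<lambda>\<omega>. h (remy_tree \<omega> k))"
  unfolding remy_space_def by (rule integrable_remy_tree_PiM) simp_all

lemma sets_remy_tree: "{\<omega>. P (remy_tree \<omega> k)} \<in> sets (remy_space p)"
  using measurable_sets[OF measurable_remy_tree, of "{t. P t}" k p] by (simp add: vimage_def)

lemma (in product_prob_space) integral_PiM_restrict:
  fixes g :: "('i \<Rightarrow> 'a) \<Rightarrow> 'b::{banach, second_countable_topology}"
  assumes "finite J" "J \<subseteq> I" and g: "g \<in> borel_measurable (PiM J M)"
    and "\<And>\<omega>. \<omega> \<in> space (PiM I M) \<Longrightarrow> g (restrict \<omega> J) = g \<omega>"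
  shows "(\<integral>\<omega>. g \<omega> \<partial>PiM I M) = (\<integral>\<omega>. g \<omega> \<partial>PiM J M)"
proof -
  have "(\<integral>\<omega>. g \<omega> \<partial>PiM J M) = (\<integral>\<omega>. g \<omega> \<partial>distr (PiM I M) (PiM J M) (\<lambda>\<omega>. restrict \<omega> J))"
    using assms by (simp add: distr_PiM_restrict_finite)
  also have "\<dots> = (\<integral>\<omega>. g (restrict \<omega> J) \<partial>PiM I M)"
    using assms by (intro integral_distr measurable_restrict_subset g)
  also have "\<dots> = (\<integral>\<omega>. g \<omega> \<partial>PiM I M)"
    using assms by (intro Bochner_Integration.integral_cong) auto
  finally show ?thesis ..
qed

lemma integral_remy_tree_eq_PiM:
  fixes g :: "stree \<Rightarrow> real"
  shows "(\<integral>\<omega>. g (remy_tree \<omega> n) \<partial>remy_space p)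
       = (\<integral>\<omega>. g (remy_tree \<omega> n) \<partial>PiM {..<n} (\<lambda>k. measure_pmf (remy_step p k)))"
proof -
  interpret product_prob_space "\<lambda>k. measure_pmf (remy_step p k)" UNIV
    by (rule product_prob_space_remy_step)
  show ?thesis
    unfolding remy_space_def
  proof (rule integral_PiM_restrict)
    show "(\<lambda>\<omega>. g (remy_tree \<omega> n)) \<in> borel_measurable (PiM {..<n} (\<lambda>k. measure_pmf (remy_step p k)))"
      by (rule measurable_compose[OF measurable_remy_tree_PiM]) auto
    have "remy_tree (restrict \<omega> {..<n}) n = remy_tree \<omega> n" for \<omega>
      by (rule remy_tree_cong) simp
    then show "g (remy_tree (restrict \<omega> {..<n}) n) = g (remy_tree \<omega> n)" for \<omega>
      by simp
  qed auto
qed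

lemma integral_remy_tree_Suc:
  fixes h :: "stree \<Rightarrow> real"
  assumes "\<And>t. \<bar>h t\<bar> \<le> C"
  shows "(\<integral>\<omega>. h (remy_tree \<omega> (Suc k)) \<partial>remy_space p)
       = (\<integral>\<omega>. (\<integral>x. h (remy_insert x (remy_tree \<omega> k)) \<partial>remy_step p k) \<partial>remy_space p)"
proof -
  let ?M = "\<lambda>k. measure_pmf (remy_step p k)"
  interpret product_prob_space ?M UNIV
    by (rule product_prob_space_remy_step)
  have "integrable (PiM (insert k {..<k}) ?M) (\<lambda>\<omega>. h (remy_tree \<omega> (Suc k)))"
    using assms by (intro integrable_remy_tree_PiM) auto
  then have "(\<integral>\<omega>. h (remy_tree \<omega> (Suc k)) \<partial>PiM (insert k {..<k}) ?M)
      = (\<integral>\<omega>. (\<integral>x. h (remy_tree (fun_upd \<omega> k x) (Suc k)) \<partial>(?M k)) \<partial>PiM {..<k} ?M)"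
    by (rule product_integral_insert[rotated 2]) auto
  also have "\<dots> = (\<integral>\<omega>. (\<integral>x. h (remy_insert x (remy_tree \<omega> k)) \<partial>(?M k)) \<partial>PiM {..<k} ?M)"
  proof -
    have "remy_tree (fun_upd \<omega> k x) k = remy_tree \<omega> k" for \<omega> x
      by (rule remy_tree_cong) simp
    then show ?thesis
      by simp
  qed
  finally show ?thesis
    using integral_remy_tree_eq_PiM[where g = h and n = "Suc k"]
      integral_remy_tree_eq_PiM[where g = "\<lambda>t. \<integral>x. h (remy_insert x t) \<partial>(?M k)" and n = k]
    by (simp add: lessThan_Suc)
qed

section \<open>A contracting potential\<close>

text \<open>The shift 3/4 is matched to the bound 4 y + 1 \<le> 3 |greedy_vertices t| for y = greedy_LIS t:
  a plus node inserted on one of these edges lowers the potential by potential y * potential (y + 1),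
  and |greedy_vertices t| * potential (y + 1) \<ge> 4/3.\<close>
definition potential :: "nat \<Rightarrow> real" where
  "potential y = 1 / (real y - 3/4)"

lemma potential_pos: "1 \<le> y \<Longrightarrow> 0 < potential y"
  by (simp add: potential_def)

lemma potential_le_4: "1 \<le> y \<Longrightarrow> potential y \<le> 4"
  unfolding potential_def by (simp add: divide_simps)

lemma potential_antimono: "1 \<le> y \<Longrightarrow> y \<le> z \<Longrightarrow> potential z \<le> potential y"
  by (simp add: potential_def frac_le)

lemma potential_diff_Suc:
  "1 \<le> y \<Longrightarrow> potential y - potential (Suc y) = potential y * potential (Suc y)"
  unfolding potential_def by (simp add: divide_simps)

lemma inverse_le_potential: "1 \<le> y \<Longrightarrow> 1 / real y \<le> potential y"
  by (simp add: potential_def frac_le)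

lemma abs_potential_greedy_LIS_le: "\<bar>potential (greedy_LIS t)\<bar> \<le> 4"
  using potential_pos potential_le_4 greedy_LIS_ge_1 by (simp add: abs_le_iff less_imp_le)

lemma finite_set_remy_step: "finite (set_pmf (remy_step p k))"
  by (simp add: remy_step_def)

lemma measure_remy_step_plus:
  assumes "0 \<le> p" "p \<le> 1" "A \<subseteq> {0..<2*k+1}"
  shows "measure_pmf.prob (remy_step p k) (A \<times> {True} \<times> UNIV) = card A / (2 * real k + 1) * p"
proof -
  have "measure_pmf.prob (remy_step p k) (A \<times> {True} \<times> UNIV)
      = measure_pmf.prob (pmf_of_set {0..<2*k+1}) A
        * (measure_pmf.prob (bernoulli_pmf p) {True} * measure_pmf.prob (bernoulli_pmf (1/2)) UNIV)"
    unfolding remy_step_def by (simp add: measure_pmf_prob_product)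
  also have "\<dots> = card A / (2 * real k + 1) * p"
    using assms by (simp add: measure_pmf_of_set measure_pmf_single Int_absorb1)
  finally show ?thesis .
qed

lemma integral_potential_remy_insert:
  assumes "0 \<le> p" "p \<le> 1" "t \<noteq> Leaf" "nverts t = 2*k+1"
  shows "(\<integral>x. potential (greedy_LIS (remy_insert x t)) \<partial>remy_step p k)
           \<le> (1 - (4*p/3) / (2 * real k + 1)) * potential (greedy_LIS t)"
proof -
  define y where "y = greedy_LIS t"
  define good where "good = greedy_vertices t \<times> {True} \<times> (UNIV :: bool set)"
  define \<delta> where "\<delta> = potential y * potential (Suc y)"
  have y: "1 \<le> y"
    unfolding y_def by (rule greedy_LIS_ge_1)
  have pointwise: "potential (greedy_LIS (remy_insert x t)) \<le> potential y - \<delta> * indicator good x" for x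
  proof (cases "x \<in> good")
    case True
    then have "Suc y \<le> greedy_LIS (remy_insert x t)"
      using greedy_LIS_insert_plus by (auto simp: good_def y_def remy_insert_def)
    then have "potential (greedy_LIS (remy_insert x t)) \<le> potential (Suc y)"
      by (rule potential_antimono[rotated]) simp
    then show ?thesis
      using True potential_diff_Suc[OF y] unfolding \<delta>_def by simp
  next
    case False
    have "y \<le> greedy_LIS (remy_insert x t)"
      using greedy_LIS_insert_at_mono by (simp add: y_def remy_insert_def split: prod.splits)
    then show ?thesis
      using False potential_antimono[OF y] by simp
  qed
  have "(\<integral>x. potential (greedy_LIS (remy_insert x t)) \<partial>remy_step p k)
      \<le> (\<integral>x. potential y - \<delta> * indicator good x \<partial>remy_step p k)"
    by (intro integral_mono integrable_measure_pmf_finite finite_set_remy_step pointwise)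
  also have "\<dots> = potential y - \<delta> * measure_pmf.prob (remy_step p k) good"
    by (simp add: integrable_measure_pmf_finite finite_set_remy_step)
  also have "measure_pmf.prob (remy_step p k) good = card (greedy_vertices t) / (2 * real k + 1) * p"
    unfolding good_def using assms greedy_vertices_subset[of t]
    by (intro measure_remy_step_plus) (auto simp: atLeast0LessThan)
  also have "potential y - \<delta> * (card (greedy_vertices t) / (2 * real k + 1) * p)
      \<le> (1 - (4*p/3) / (2 * real k + 1)) * potential y"
  proof -
    have "4 * real y + 1 \<le> 3 * card (greedy_vertices t)"
      using card_greedy_vertices_ge_Node[OF assms(3)] unfolding y_def by linarith
    then have "4/3 \<le> card (greedy_vertices t) * potential (Suc y)"
      by (simp add: potential_def divide_simps)
    then have "potential y * (p / (2 * real k + 1)) * (4/3)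
        \<le> potential y * (p / (2 * real k + 1)) * (card (greedy_vertices t) * potential (Suc y))"
      using assms(1) potential_pos[OF y] by (intro mult_left_mono) auto
    then show ?thesis
      by (simp add: \<delta>_def algebra_simps)
  qed
  finally show ?thesis
    unfolding y_def .
qed

definition expected_potential :: "real \<Rightarrow> nat \<Rightarrow> real" where
  "expected_potential p k = (\<integral>\<omega>. potential (greedy_LIS (remy_tree \<omega> k)) \<partial>remy_space p)"

lemma expected_potential_nonneg: "0 \<le> expected_potential p k"
  unfolding expected_potential_def
  by (intro integral_nonneg_AE AE_I2 less_imp_le[OF potential_pos] greedy_LIS_ge_1)

lemma expected_potential_le_4: "expected_potential p k \<le> 4"
proof -
  interpret prob_space "remy_space p"
    by (rule prob_space_remy_space)
  have "expected_potential p k \<le> (\<integral>\<omega>. 4 \<partial>remy_space p)"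
    unfolding expected_potential_def
    using abs_potential_greedy_LIS_le
    by (intro integral_mono integrable_remy_tree) (auto simp: abs_le_iff)
  then show ?thesis
    using prob_space by simp
qed

lemma expected_potential_Suc_le:
  assumes "0 \<le> p" "p \<le> 1" "1 \<le> k"
  shows "expected_potential p (Suc k) \<le> (1 - (4*p/3) / (2 * real k + 1)) * expected_potential p k"
proof -
  let ?\<rho> = "1 - (4*p/3) / (2 * real k + 1)"
  have \<rho>: "0 \<le> ?\<rho>"
    using assms by (simp add: field_simps)
  have "expected_potential p (Suc k)
      = (\<integral>\<omega>. (\<integral>x. potential (greedy_LIS (remy_insert x (remy_tree \<omega> k))) \<partial>remy_step p k) \<partial>remy_space p)"
    unfolding expected_potential_def by (rule integral_remy_tree_Suc[OF abs_potential_greedy_LIS_le])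
  also have "\<dots> \<le> (\<integral>\<omega>. ?\<rho> * potential (greedy_LIS (remy_tree \<omega> k)) \<partial>remy_space p)"
  proof (rule integral_mono')
    show "integrable (remy_space p) (\<lambda>\<omega>. ?\<rho> * potential (greedy_LIS (remy_tree \<omega> k)))"
      using abs_potential_greedy_LIS_le by (intro integrable_mult_right integrable_remy_tree)
    show "(\<integral>x. potential (greedy_LIS (remy_insert x (remy_tree \<omega> k))) \<partial>remy_step p k)
        \<le> ?\<rho> * potential (greedy_LIS (remy_tree \<omega> k))" for \<omega>
      using assms by (intro integral_potential_remy_insert remy_tree_not_Leaf nverts_remy_tree)
    show "0 \<le> ?\<rho> * potential (greedy_LIS (remy_tree \<omega> k))" for \<omega>
      by (intro mult_nonneg_nonneg \<rho> less_imp_le[OF potential_pos[OF greedy_LIS_ge_1]])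
  qed
  also have "\<dots> = ?\<rho> * expected_potential p k"
    by (simp add: expected_potential_def)
  finally show ?thesis .
qed

section \<open>Almost sure growth\<close>

lemma one_minus_le_powr_ratio:
  fixes x a :: real
  assumes "0 < x" "0 \<le> a"
  shows "1 - a / x \<le> (x / (x + 1)) powr a"
proof -
  have "ln (x / (x + 1)) = - ln (1 + 1 / x)"
    using assms by (simp add: ln_div field_simps)
  moreover have "ln (1 + 1 / x) \<le> 1 / x"
    using assms by (intro ln_add_one_self_le_self) simp
  ultimately have "- (a / x) \<le> a * ln (x / (x + 1))"
    using mult_left_mono[of "ln (1 + 1 / x)" "1 / x" a] assms by simp
  then have "exp (- (a / x)) \<le> exp (a * ln (x / (x + 1)))"
    by simp
  then have "1 - a / x \<le> exp (a * ln (x / (x + 1)))"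
    using exp_ge_add_one_self[of "- (a / x)"] by linarith
  then show ?thesis
    using assms by (simp add: powr_def)
qed

lemma mult_powr_le_of_recurrence:
  fixes e :: "nat \<Rightarrow> real"
  assumes "0 \<le> a" "1 \<le> k\<^sub>0" "k\<^sub>0 \<le> k"
    and nonneg: "\<And>k. 0 \<le> e k"
    and recurrence: "\<And>k. k\<^sub>0 \<le> k \<Longrightarrow> e (Suc k) \<le> (1 - a / k) * e k"
  shows "e k * k powr a \<le> e k\<^sub>0 * k\<^sub>0 powr a"
  using \<open>k\<^sub>0 \<le> k\<close>
proof (induction k rule: dec_induct)
  case (step k)
  have k: "0 < real k"
    using step.hyps assms(2) by simp
  have "e (Suc k) * Suc k powr a \<le> (1 - a / k) * e k * Suc k powr a"
    using recurrence[OF step.hyps(1)] by (intro mult_right_mono) auto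
  also have "\<dots> \<le> (k / (k + 1)) powr a * e k * Suc k powr a"
    using one_minus_le_powr_ratio[OF k assms(1)] nonneg[of k]
    by (intro mult_right_mono) (auto simp: add.commute)
  also have "\<dots> = e k * k powr a"
    using k by (simp add: powr_divide add.commute)
  finally show ?case
    using step.IH by linarith
qed simp

text \<open>Any exponent below 2p/3 satisfies the recurrence for large k; 7p/12 does so from k = 4 on
  and still exceeds p/2, the exponent used with Markov's inequality below.\<close>
lemma expected_potential_mult_powr_le:
  assumes "0 \<le> p" "p \<le> 1" "4 \<le> k"
  shows "expected_potential p k * k powr (7*p/12) \<le> 16"
proof -
  let ?a = "7*p/12"
  have "expected_potential p k * k powr ?a \<le> expected_potential p 4 * real 4 powr ?a"
  proof (rule mult_powr_le_of_recurrence)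
    fix k :: nat
    assume k: "4 \<le> k"
    have "?a * (2 * real k + 1) \<le> (4*p/3) * k"
      using k assms(1) mult_left_mono[of "7 * (2 * real k + 1)" "16 * k" p]
      by (simp add: algebra_simps)
    then have "1 - (4*p/3) / (2 * real k + 1) \<le> 1 - ?a / k"
      using k by (simp add: field_simps)
    then have "(1 - (4*p/3) / (2 * real k + 1)) * expected_potential p k
        \<le> (1 - ?a / k) * expected_potential p k"
      by (rule mult_right_mono[OF _ expected_potential_nonneg])
    then show "expected_potential p (Suc k) \<le> (1 - ?a / k) * expected_potential p k"
      using expected_potential_Suc_le[of p k] assms k by simp
  qed (use assms expected_potential_nonneg in auto)
  also have "\<dots> \<le> 4 * 4"
  proof (rule mult_mono)
    show "real 4 powr ?a \<le> 4"
      using assms powr_mono[of ?a 1 4] by simp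
  qed (use expected_potential_le_4 in auto)
  finally show ?thesis
    by simp
qed

lemma measure_greedy_LIS_remy_tree_less:
  assumes "0 \<le> p" "p \<le> 1" "4 \<le> k"
  shows "measure (remy_space p) {\<omega>. greedy_LIS (remy_tree \<omega> k) < k powr (p/2)}
           \<le> 16 / k powr (p/12)"
proof -
  interpret prob_space "remy_space p"
    by (rule prob_space_remy_space)
  let ?c = "k powr (p/2)"
  have c: "0 < ?c"
    using assms by simp
  have "{\<omega>. greedy_LIS (remy_tree \<omega> k) < ?c}
      \<subseteq> {\<omega> \<in> space (remy_space p). 1 / ?c \<le> potential (greedy_LIS (remy_tree \<omega> k))}"
  proof safe
    fix \<omega>
    assume "greedy_LIS (remy_tree \<omega> k) < ?c"
    then have "1 / ?c \<le> 1 / greedy_LIS (remy_tree \<omega> k)"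
      using c greedy_LIS_ge_1[of "remy_tree \<omega> k"] by (intro divide_left_mono) auto
    also have "\<dots> \<le> potential (greedy_LIS (remy_tree \<omega> k))"
      by (rule inverse_le_potential[OF greedy_LIS_ge_1])
    finally show "1 / ?c \<le> potential (greedy_LIS (remy_tree \<omega> k))" .
  qed simp
  then have "prob {\<omega>. greedy_LIS (remy_tree \<omega> k) < ?c}
      \<le> prob {\<omega> \<in> space (remy_space p). 1 / ?c \<le> potential (greedy_LIS (remy_tree \<omega> k))}"
    using sets_remy_tree[of "\<lambda>t. 1 / ?c \<le> potential (greedy_LIS t)" k p]
    by (intro finite_measure_mono) simp_all
  also have "\<dots> \<le> expected_potential p k / (1 / ?c)"
    unfolding expected_potential_def
  proof (rule integral_Markov_inequality_measure[where A = "space (remy_space p)"])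
    show "integrable (remy_space p) (\<lambda>\<omega>. potential (greedy_LIS (remy_tree \<omega> k)))"
      by (rule integrable_remy_tree[OF abs_potential_greedy_LIS_le])
    show "AE \<omega> in remy_space p. 0 \<le> potential (greedy_LIS (remy_tree \<omega> k))"
      by (intro AE_I2 less_imp_le[OF potential_pos] greedy_LIS_ge_1)
  qed (use c sets.top[of "remy_space p"] in auto)
  also have "\<dots> = expected_potential p k * k powr (7*p/12) / k powr (p/12)"
  proof -
    have "p/2 = 7*p/12 - p/12"
      by simp
    then show ?thesis
      by (simp only: powr_diff) simp
  qed
  also have "\<dots> \<le> 16 / k powr (p/12)"
    using assms by (intro divide_right_mono expected_potential_mult_powr_le) auto
  finally show ?thesis .
qed

lemma AE_eventually_greedy_LIS_remy_tree_dyadic: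
  assumes "0 < p" "p \<le> 1"
  shows "AE \<omega> in remy_space p. eventually
           (\<lambda>j. real (2^j) powr (p/2) \<le> greedy_LIS (remy_tree \<omega> (2^j))) sequentially"
proof -
  interpret prob_space "remy_space p"
    by (rule prob_space_remy_space)
  define A where "A j = {\<omega>. greedy_LIS (remy_tree \<omega> (2^j)) < real (2^j) powr (p/2)}" for j :: nat
  define r where "r = 1 / 2 powr (p/12)"
  have r: "0 < r" "r < 1"
    using assms by (auto simp: r_def)
  have bound: "norm (measure (remy_space p) (A j)) \<le> 16 * r ^ j" if "2 \<le> j" for j
  proof -
    have "(4::nat) \<le> 2^j"
      using power_increasing[OF that, of "2::nat"] by simp
    then have "measure (remy_space p) (A j) \<le> 16 / real (2^j) powr (p/12)"
      unfolding A_def using assms by (intro measure_greedy_LIS_remy_tree_less) auto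
    also have "real (2^j) powr (p/12) = (2 powr (p/12)) ^ j"
      by (simp add: powr_realpow[symmetric] powr_powr mult.commute)
    finally show ?thesis
      by (simp add: r_def power_one_over)
  qed
  have events: "A j \<in> events" for j
    unfolding A_def by (rule sets_remy_tree)
  have summable: "summable (\<lambda>j. measure (remy_space p) (A j))"
    by (rule summable_comparison_test'[OF _ bound]) (use r in \<open>auto intro!: summable_geometric\<close>)
  have "AE \<omega> in remy_space p. eventually (\<lambda>j. \<omega> \<in> space (remy_space p) - A j) sequentially"
    by (rule borel_cantelli_AE1[OF events _ summable]) (simp add: emeasure_eq_measure)
  then show ?thesis
  proof (rule eventually_mono)
    fix \<omega>
    assume "eventually (\<lambda>j. \<omega> \<in> space (remy_space p) - A j) sequentially"
    then show "eventually (\<lambda>j. real (2^j) powr (p/2) \<le> greedy_LIS (remy_tree \<omega> (2^j))) sequentially"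
      by (rule eventually_mono) (simp add: A_def not_less)
  qed
qed

lemma lower_bound_of_dyadic_lower_bound:
  fixes b :: "nat \<Rightarrow> real"
  assumes "mono b" "\<And>k. 1 \<le> b k" "0 \<le> a" "a \<le> 1"
    and dyadic: "\<And>j. J \<le> j \<Longrightarrow> real (2^j) powr a \<le> b (2^j)"
  shows "real (Suc k) powr a / (2 * 2^J) \<le> b k"
proof (cases "k < 2^J")
  case True
  have "real (Suc k) powr a \<le> real (Suc k) powr 1"
    using assms by (intro powr_mono) auto
  also have "\<dots> \<le> 2^J"
    using True by (simp flip: of_nat_Suc)
  finally have "real (Suc k) powr a / (2 * 2^J) \<le> 1/2"
    by (simp add: field_simps)
  then show ?thesis
    using assms(2)[of k] by linarith
next
  case False
  then have "1 \<le> k"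
    using one_le_power[of "2::nat" J] by linarith
  then obtain j where j: "2^j \<le> k" "k < 2^Suc j"
    using ex_power_ivl1[of 2 k] by auto
  have "J \<le> j"
    using False j(2) power_increasing[of "Suc j" J "2::nat"] by (cases "J \<le> j") auto
  have "Suc k \<le> 2 * 2^j"
    using j(2) by simp
  then have "real (Suc k) \<le> real (2 * 2^j)"
    by (rule of_nat_mono)
  then have "real (Suc k) powr a \<le> real (2 * 2^j) powr a"
    using assms(3) by (intro powr_mono2) auto
  also have "\<dots> = 2 powr a * real (2^j) powr a"
    by (simp add: powr_mult)
  also have "\<dots> \<le> 2 * b (2^j)"
    using assms dyadic[OF \<open>J \<le> j\<close>] powr_mono[of a 1 2] by (intro mult_mono) auto
  also have "\<dots> \<le> 2 * b k"
    using \<open>mono b\<close> j(1) by (simp add: mono_def)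
  also have "\<dots> \<le> (2 * 2^J) * b k"
    using assms(2)[of k] by (intro mult_right_mono) auto
  finally show ?thesis
    by (simp add: field_simps)
qed

lemma measurable_X: "(\<lambda>\<omega>. X \<omega> n) \<in> remy_space p \<rightarrow>\<^sub>M count_space UNIV"
  unfolding X_def by (rule measurable_compose[OF measurable_remy_tree]) simp

lemma AE_X_ge_powr:
  assumes "0 < p" "p \<le> 1"
  shows "AE \<omega> in remy_space p. \<exists>c>0. \<forall>n\<ge>1. c * real n powr (p/2) \<le> X \<omega> n"
  using AE_eventually_greedy_LIS_remy_tree_dyadic[OF assms]
proof (rule eventually_mono)
  fix \<omega>
  assume "eventually (\<lambda>j. real (2^j) powr (p/2) \<le> greedy_LIS (remy_tree \<omega> (2^j))) sequentially"
  then obtain J where J: "\<And>j. J \<le> j \<Longrightarrow> real (2^j) powr (p/2) \<le> greedy_LIS (remy_tree \<omega> (2^j))"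
    by (auto simp: eventually_sequentially)
  have bound: "real (Suc k) powr (p/2) / (2 * 2^J) \<le> greedy_LIS (remy_tree \<omega> k)" for k
    using assms J greedy_LIS_ge_1
    by (intro lower_bound_of_dyadic_lower_bound monoI) (auto intro: greedy_LIS_remy_tree_mono)
  have "1 / (2 * 2^J) * real n powr (p/2) \<le> X \<omega> n" if "1 \<le> n" for n
  proof -
    have "real n powr (p/2) / (2 * 2^J) \<le> greedy_LIS (remy_tree \<omega> (n - 1))"
      using bound[of "n - 1"] that by simp
    also have "\<dots> \<le> X \<omega> n"
      unfolding X_def using greedy_LIS_le_LIS by simp
    finally show ?thesis
      by simp
  qed
  then show "\<exists>c>0. \<forall>n\<ge>1. c * real n powr (p/2) \<le> X \<omega> n"
    by (intro exI[of _ "1 / (2 * 2^J)"]) auto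
qed

theorem lemma9p6:
  fixes p :: real
  assumes "0 < p" and "p < 1"
  shows "\<exists>M :: (nat \<Rightarrow> nat \<times> bool \<times> bool) \<Rightarrow> real.
           M \<in> borel_measurable (remy_space p) \<and>
           (AE \<omega> in remy_space p. M \<omega> > 0) \<and>
           (AE \<omega> in remy_space p. \<forall>n\<ge>1. real (X \<omega> n) \<ge> M \<omega> * real n powr (p / 2))"
proof -
  define M where "M \<omega> = (INF n\<in>{1..}. X \<omega> n / real n powr (p/2))" for \<omega>
  have M_le: "M \<omega> * real n powr (p/2) \<le> X \<omega> n" if "1 \<le> n" for \<omega> n
  proof -
    have "M \<omega> \<le> X \<omega> n / real n powr (p/2)"
      unfolding M_def using that by (intro cINF_lower bdd_belowI2[where m = 0]) auto
    then show ?thesis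
      using that by (simp add: pos_le_divide_eq)
  qed
  have "M \<in> borel_measurable (remy_space p)"
    unfolding M_def
    by (intro borel_measurable_cINF_real measurable_compose[OF measurable_X]) simp_all
  moreover have "AE \<omega> in remy_space p. 0 < M \<omega>"
    using AE_X_ge_powr[OF assms(1) less_imp_le[OF assms(2)]]
  proof (rule eventually_mono)
    fix \<omega>
    assume "\<exists>c>0. \<forall>n\<ge>1. c * real n powr (p/2) \<le> X \<omega> n"
    then obtain c where "0 < c" and c: "\<And>n. 1 \<le> n \<Longrightarrow> c * real n powr (p/2) \<le> X \<omega> n"
      by blast
    have "c \<le> M \<omega>"
      unfolding M_def using c by (intro cINF_greatest) (auto simp: pos_le_divide_eq)
    with \<open>0 < c\<close> show "0 < M \<omega>"
      by simp
  qed
  ultimately show ?thesis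
    using M_le by (intro exI[of _ M]) auto
qed

end
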